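(* Let $T$ be a key with at most $n$ rows. Then $$\sum_{Q}\beta^{|\mathrm{wt}(Q)|-|\mathrm{wt}(T)|}x^{\mathrm{wt}(Q)}=\mathfrak{L}^{(\beta)}_{\mathrm{wt}(\mathrm{cap}_n(T))},$$ where the sum is over reverse set-valued tableaux $Q$ of the same shape as $T$ with $K_-(L(Q))\le T$ entrywise and $\max(Q)\le n$.
   Context: Tableaux are in English convention; $T_c$ is the set of entries of column $c$; $|\mathrm{wt}(T)|$ denotes the number of cells of $T$. A key is a tableau with strictly increasing columns and $T_1\supseteq T_2\supseteq\cdots$. For a key $T$ with at most $n$ rows, $\mathrm{cap}_n(T)$ replaces, in each column, entries larger than $n$ by the largest integers in $[n]$ missing from that column, then sorts each column increasingly. For a tableau with entries in $[n]$, $\mathrm{wt}$ is the weak composition counting occurrences of each $i\in[n]$. A reverse set-valued tableau (RSVT) is a filling of a Young diagram with nonempty finite subsets of $\mathbb{Z}_{>0}$ such that $\min Q(r,c)\ge\max Q(r,c+1)$ and $\min Q(r,c)>\max Q(r+1,c)$; $\max(Q)$ is its largest entry; $\mathrm{wt}(Q)_i$ is the number of cells containing $i$; $L(Q)$ keeps the largest element of each cell. For finite $S,T$, $T\trianglerighteq S$ is obtained by going through $S$ from smallest to largest, each $s$ picking the smallest not-yet-picked $t\in T$ with $t\ge s$, and taking the picked set; $K_-(L(Q))$ is the tableau of the same shape whose column $i$ is $L(Q)_1\trianglerighteq(L(Q)_2\trianglerighteq(\cdots\trianglerighteq L(Q)_i))$ sorted increasingly. For a weak composition $\alpha$ with $n$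 parts, $\mathrm{key}(\alpha)$ is the key whose column $c$ is $\{i:\alpha_i\ge c\}$, $|\alpha|=\sum\alpha_i$, and the Lascoux polynomial is $\mathfrak{L}^{(\beta)}_\alpha=\sum_{Q}\beta^{|\mathrm{wt}(Q)|-|\alpha|}x^{\mathrm{wt}(Q)}$ over RSVTs $Q$ with entries subsets of $[n]$, of the same shape as $\mathrm{key}(\alpha)$, with $K_-(L(Q))\le\mathrm{key}(\alpha)$ entrywise. *)

theory Defs
  imports Main
begin

text \<open>A tableau is a list of columns; each column is listed top to bottom
(English convention, row 1 on top). Indices are 0-based in the lists.\<close>

type_synonym 'a tableau = "'a list list"

definition shape :: "'a tableau \<Rightarrow> nat list" where
  "shape T = map length T"

definition ncells :: "'a tableau \<Rightarrow> nat" where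
  "ncells T = sum_list (shape T)"

definition is_key :: "nat tableau \<Rightarrow> bool" where
  "is_key T \<longleftrightarrow>
     (\<forall>c<length T. T!c \<noteq> [] \<and> sorted_wrt (<) (T!c) \<and> 0 \<notin> set (T!c)) \<and>
     (\<forall>c. Suc c < length T \<longrightarrow> set (T!Suc c) \<subseteq> set (T!c))"

definition at_most_rows :: "nat \<Rightarrow> 'a tableau \<Rightarrow> bool" where
  "at_most_rows n T \<longleftrightarrow> (\<forall>c<length T. length (T!c) \<le> n)"

definition cap_col :: "nat \<Rightarrow> nat list \<Rightarrow> nat list" where
  "cap_col n C =
     (let k = length (filter (\<lambda>c. n < c) C);
          M = {1..n} - set C
      in sorted_list_of_set ((set C \<inter> {1..n}) \<union> set (take k (rev (sorted_list_of_set M)))))"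

definition cap :: "nat \<Rightarrow> nat tableau \<Rightarrow> nat tableau" where
  "cap n T = map (cap_col n) T"

text \<open>Weight of a tableau with entries in [n], as a weak composition with n parts,
represented as a function supported on {1..n}.\<close>
definition wt_tab :: "nat \<Rightarrow> nat tableau \<Rightarrow> nat \<Rightarrow> nat" where
  "wt_tab n T i = (if 1 \<le> i \<and> i \<le> n then (\<Sum>col\<leftarrow>T. count_list col i) else 0)"

definition wsize :: "nat \<Rightarrow> (nat \<Rightarrow> nat) \<Rightarrow> nat" where
  "wsize n \<alpha> = (\<Sum>i=1..n. \<alpha> i)"

definition key_of :: "nat \<Rightarrow> (nat \<Rightarrow> nat) \<Rightarrow> nat tableau" where
  "key_of n \<alpha> =
     map (\<lambda>c. filter (\<lambda>i. c \<le> \<alpha> i) [1..<Suc n]) [1..<Suc (Max (insert 0 (\<alpha> ` {1..n})))]"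

definition is_rsvt :: "nat set tableau \<Rightarrow> bool" where
  "is_rsvt Q \<longleftrightarrow>
     (\<forall>c<length Q. Q!c \<noteq> []) \<and>
     (\<forall>c. Suc c < length Q \<longrightarrow> length (Q!Suc c) \<le> length (Q!c)) \<and>
     (\<forall>c<length Q. \<forall>r<length (Q!c). Q!c!r \<noteq> {} \<and> finite (Q!c!r) \<and> 0 \<notin> Q!c!r) \<and>
     (\<forall>c r. Suc c < length Q \<and> r < length (Q!Suc c) \<longrightarrow> Max (Q!Suc c!r) \<le> Min (Q!c!r)) \<and>
     (\<forall>c r. c < length Q \<and> Suc r < length (Q!c) \<longrightarrow> Max (Q!c!Suc r) < Min (Q!c!r))"

definition rsvt_entries :: "nat set tableau \<Rightarrow> nat set" where
  "rsvt_entries Q = \<Union> (set (concat Q))"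

definition rsvt_size :: "nat set tableau \<Rightarrow> nat" where
  "rsvt_size Q = sum_list (map card (concat Q))"

definition wt_rsvt :: "nat set tableau \<Rightarrow> nat \<Rightarrow> nat" where
  "wt_rsvt Q i = length (filter (\<lambda>S. i \<in> S) (concat Q))"

definition xpow :: "nat \<Rightarrow> (nat \<Rightarrow> 'a::comm_monoid_mult) \<Rightarrow> (nat \<Rightarrow> nat) \<Rightarrow> 'a" where
  "xpow n x w = (\<Prod>i=1..n. x i ^ w i)"

definition Lmax :: "nat set tableau \<Rightarrow> nat tableau" where
  "Lmax Q = map (map Max) Q"

fun pick :: "nat set \<Rightarrow> nat list \<Rightarrow> nat set" where
  "pick T [] = {}"
| "pick T (s # ss) =
     (let C = {t \<in> T. s \<le> t}
      in if C = {} then pick T ss else insert (Min C) (pick (T - {Min C}) ss))"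

definition domin :: "nat set \<Rightarrow> nat set \<Rightarrow> nat set" where
  "domin T S = pick T (sorted_list_of_set S)"

definition K_minus :: "nat tableau \<Rightarrow> nat tableau" where
  "K_minus Lt =
     map (\<lambda>i. sorted_list_of_set (foldr domin (map set (take i Lt)) (set (Lt!i)))) [0..<length Lt]"

definition entrywise_le :: "nat tableau \<Rightarrow> nat tableau \<Rightarrow> bool" where
  "entrywise_le A B \<longleftrightarrow> list_all2 (list_all2 (\<le>)) A B"

definition lascoux :: "nat \<Rightarrow> 'a::comm_ring_1 \<Rightarrow> (nat \<Rightarrow> 'a) \<Rightarrow> (nat \<Rightarrow> nat) \<Rightarrow> 'a" where
  "lascoux n \<beta> x \<alpha> =
     (\<Sum>Q\<in>{Q. is_rsvt Q \<and> rsvt_entries Q \<subseteq> {1..n} \<and> shape Q = shape (key_of n \<alpha>) \<and>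
             entrywise_le (K_minus (Lmax Q)) (key_of n \<alpha>)}.
        \<beta> ^ (rsvt_size Q - wsize n \<alpha>) * xpow n x (wt_rsvt Q))"

end

theory Submission
  imports Defs
begin

text \<open>Capping turns the key \<open>T\<close> into a key with entries in \<open>[n]\<close> and the same shape, so
\<open>cap\<^sub>n(T) = key(wt(cap\<^sub>n(T)))\<close>, and the two sums run over RSVTs of the same shape with
the same exponent of \<open>\<beta>\<close>. It remains to show that for an RSVT \<open>Q\<close> with \<open>max(Q) \<le> n\<close>
we have \<open>K\<^sub>-(L(Q)) \<le> T\<close> iff \<open>K\<^sub>-(L(Q)) \<le> cap\<^sub>n(T)\<close>. This is a statement about single
columns: the columns \<open>a\<close> of \<open>K\<^sub>-(L(Q))\<close> are strictly increasing with entries \<open>\<le> n\<close>, and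
for strictly increasing columns of equal length, \<open>a \<le> C\<close> entrywise iff for every \<open>v\<close> at
least as many entries of \<open>a\<close> as of \<open>C\<close> are \<open>\<le> v\<close>. Capping \<open>C\<close> never lowers these
counts, and once \<open>v\<close> reaches the smallest filled-in entry, \<open>cap\<^sub>n(C)\<close> contains all of
\<open>(v, n]\<close>, so its count is \<open>|C| - (n - v)\<close>, the least possible count of any \<open>|C|\<close>-subset
of \<open>[n]\<close>.\<close>

text \<open>The hypothesis \<open>sorted_wrt (\<lambda>a b. P b \<longrightarrow> P a) xs\<close> says that the elements of \<open>xs\<close>
satisfying \<open>P\<close> form a prefix.\<close>

lemma filter_eq_takeWhile_prefix_closed:
  assumes "sorted_wrt (\<lambda>a b. P b \<longrightarrow> P a) xs"
  shows "filter P xs = takeWhile P xs"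
  using assms by (induction xs) auto

lemma less_length_takeWhile_iff_prefix_closed:
  assumes "sorted_wrt (\<lambda>a b. P b \<longrightarrow> P a) xs" "i < length xs"
  shows "i < length (takeWhile P xs) \<longleftrightarrow> P (xs ! i)"
  using assms by (induction xs arbitrary: i) (auto simp: nth_Cons split: nat.split)

lemma strict_sorted_nth_le_iff:
  fixes xs :: "'a::linorder list"
  assumes "sorted_wrt (<) xs" "i < length xs"
  shows "xs ! i \<le> v \<longleftrightarrow> i < card {a \<in> set xs. a \<le> v}"
proof -
  have closed: "sorted_wrt (\<lambda>a b. b \<le> v \<longrightarrow> a \<le> v) xs"
    using assms(1) by (rule sorted_wrt_mono_rel[rotated]) auto
  have "card {a \<in> set xs. a \<le> v} = length (filter (\<lambda>a. a \<le> v) xs)"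
    using assms(1) by (simp add: strict_sorted_iff distinct_card[symmetric])
  also have "\<dots> = length (takeWhile (\<lambda>a. a \<le> v) xs)"
    using filter_eq_takeWhile_prefix_closed[OF closed] by simp
  finally show ?thesis
    using less_length_takeWhile_iff_prefix_closed[OF closed assms(2)] by simp
qed

lemma list_all2_le_iff_card_le:
  fixes xs ys :: "'a::linorder list"
  assumes xs: "sorted_wrt (<) xs" and ys: "sorted_wrt (<) ys" and len: "length xs = length ys"
  shows "list_all2 (\<le>) xs ys \<longleftrightarrow>
           (\<forall>v. card {b \<in> set ys. b \<le> v} \<le> card {a \<in> set xs. a \<le> v})"
proof
  assume le: "list_all2 (\<le>) xs ys"
  show "\<forall>v. card {b \<in> set ys. b \<le> v} \<le> card {a \<in> set xs. a \<le> v}"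
  proof
    fix v
    have "i < card {a \<in> set xs. a \<le> v}" if i: "i < card {b \<in> set ys. b \<le> v}" for i
    proof -
      have "card {b \<in> set ys. b \<le> v} \<le> length ys"
        using card_mono[of "set ys" "{b \<in> set ys. b \<le> v}"] card_length[of ys] by auto
      then have "i < length ys" using i by simp
      then have "xs ! i \<le> ys ! i" "ys ! i \<le> v"
        using le i strict_sorted_nth_le_iff[OF ys] by (auto simp: list_all2_conv_all_nth)
      then have "xs ! i \<le> v" by (rule order_trans)
      then show ?thesis
        using strict_sorted_nth_le_iff[OF xs] \<open>i < length ys\<close> len by simp
    qed
    then show "card {b \<in> set ys. b \<le> v} \<le> card {a \<in> set xs. a \<le> v}"
      using not_le by blast
  qed
next
  assume count_le: "\<forall>v. card {b \<in> set ys. b \<le> v} \<le> card {a \<in> set xs. a \<le> v}"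
  have "xs ! i \<le> ys ! i" if i: "i < length xs" for i
  proof -
    have "i < card {b \<in> set ys. b \<le> ys ! i}"
      using strict_sorted_nth_le_iff[OF ys, of i "ys ! i"] i len by simp
    also have "\<dots> \<le> card {a \<in> set xs. a \<le> ys ! i}"
      using count_le by blast
    finally show ?thesis
      using strict_sorted_nth_le_iff[OF xs i] by simp
  qed
  then show "list_all2 (\<le>) xs ys"
    using len by (simp add: list_all2_conv_all_nth)
qed

lemma card_minus_le_card_atMost:
  fixes X :: "nat set"
  assumes "X \<subseteq> {..n}"
  shows "card X - (n - v) \<le> card {a \<in> X. a \<le> v}"
proof -
  have fin: "finite X" using assms finite_subset by blast
  have "card X \<le> card ({a \<in> X. a \<le> v} \<union> {v<..n})"
    using assms fin by (intro card_mono) auto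
  also have "\<dots> \<le> card {a \<in> X. a \<le> v} + card {v<..n}"
    by (rule card_Un_le)
  finally show ?thesis by simp
qed

lemma set_take_rev_sorted_list_of_set:
  fixes M :: "'a::linorder set"
  assumes "finite M"
  shows "set (take k (rev (sorted_list_of_set M))) = {e \<in> M. card {f \<in> M. e < f} < k}"
proof -
  define xs where "xs = rev (sorted_list_of_set M)"
  have dec: "sorted_wrt (>) xs" and "distinct xs" and set_xs: "set xs = M"
    using assms by (simp_all add: xs_def sorted_wrt_rev)
  have card_above: "card {f \<in> M. xs ! i < f} = i" if i: "i < length xs" for i
  proof -
    have "xs ! i < xs ! j \<longleftrightarrow> j < i" if "j < length xs" for j
      using dec i that by (metis linorder_neqE_nat order.asym sorted_wrt_nth_less)
    then have "{f \<in> M. xs ! i < f} = (!) xs ` {j. j < length xs \<and> j < i}"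
      unfolding set_xs[symmetric] set_conv_nth by blast
    also have "{j. j < length xs \<and> j < i} = {0..<i}"
      using i by auto
    also have "(!) xs ` {0..<i} = set (take i xs)"
      using i by (simp add: nth_image)
    finally show ?thesis
      using i \<open>distinct xs\<close> by (simp add: distinct_card)
  qed
  show ?thesis
    unfolding xs_def[symmetric]
  proof (intro set_eqI iffI)
    fix e assume "e \<in> set (take k xs)"
    then obtain j where "j < length xs" "j < k" "e = xs ! j"
      by (auto simp: in_set_conv_nth)
    then show "e \<in> {e \<in> M. card {f \<in> M. e < f} < k}"
      using card_above set_xs by auto
  next
    fix e assume e: "e \<in> {e \<in> M. card {f \<in> M. e < f} < k}"
    then obtain j where "j < length xs" "e = xs ! j"
      using set_xs by (auto simp: in_set_conv_nth)
    then show "e \<in> set (take k xs)"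
      using e card_above by (auto simp: in_set_conv_nth intro!: exI[of _ j])
  qed
qed

definition cap_fill :: "nat \<Rightarrow> nat list \<Rightarrow> nat set" where
  "cap_fill n C =
     set (take (length (filter (\<lambda>c. n < c) C)) (rev (sorted_list_of_set ({1..n} - set C))))"

lemma finite_cap_fill [simp]: "finite (cap_fill n C)"
  by (simp add: cap_fill_def)

lemma cap_fill_iff:
  "e \<in> cap_fill n C \<longleftrightarrow>
     e \<in> {1..n} - set C \<and> card {f \<in> {1..n} - set C. e < f} < length (filter (\<lambda>c. n < c) C)"
  by (simp add: cap_fill_def set_take_rev_sorted_list_of_set)

lemma set_cap_col: "set (cap_col n C) = (set C \<inter> {1..n}) \<union> cap_fill n C"
  by (simp add: cap_col_def cap_fill_def Let_def)

lemma set_cap_col_subset: "set (cap_col n C) \<subseteq> {1..n}"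
  by (auto simp: set_cap_col cap_fill_iff)

lemma sorted_cap_col: "sorted_wrt (<) (cap_col n C)"
  by (simp add: cap_col_def Let_def)

lemma length_cap_col:
  assumes "distinct C" "0 \<notin> set C" "length C \<le> n"
  shows "length (cap_col n C) = length C"
proof -
  define M where "M = {1..n} - set C"
  define k where "k = length (filter (\<lambda>c. n < c) C)"
  have "set C = (set C \<inter> {1..n}) \<union> {c \<in> set C. n < c}"
    using assms(2) by (auto simp: not_less Suc_le_eq intro: gr0I)
  then have C_split: "length C = card (set C \<inter> {1..n}) + k"
    using assms(1) by (simp add: k_def distinct_length_filter distinct_card[symmetric]
        card_Un_disjoint[symmetric] disjoint_iff)
  have "M = {1..n} - (set C \<inter> {1..n})"
    by (auto simp: M_def)
  then have "card M = n - card (set C \<inter> {1..n})"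
    by (simp add: card_Diff_subset)
  then have "card (cap_fill n C) = k"
    using C_split assms(3) unfolding cap_fill_def M_def[symmetric] k_def[symmetric]
    by (simp add: distinct_card)
  then have "card (set (cap_col n C)) = length C"
    unfolding set_cap_col using C_split
    by (subst card_Un_disjoint) (auto simp: cap_fill_iff)
  then show ?thesis
    using sorted_cap_col by (metis distinct_card strict_sorted_iff)
qed

lemma set_cap_col_mono:
  assumes "set C' \<subseteq> set C" "distinct C" "distinct C'"
  shows "set (cap_col n C') \<subseteq> set (cap_col n C)"
proof
  fix e assume e: "e \<in> set (cap_col n C')"
  have k: "length (filter (\<lambda>c. n < c) C') \<le> length (filter (\<lambda>c. n < c) C)"
    using assms by (auto simp: distinct_length_filter intro!: card_mono)
  have "card {f \<in> {1..n} - set C. e < f} \<le> card {f \<in> {1..n} - set C'. e < f}"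
    using assms(1) by (intro card_mono) auto
  then show "e \<in> set (cap_col n C)"
    using e k assms(1) by (auto simp: set_cap_col cap_fill_iff)
qed

lemma card_le_card_cap_col:
  assumes "distinct C" "0 \<notin> set C" "length C \<le> n"
  shows "card {b \<in> set C. b \<le> v} \<le> card {b \<in> set (cap_col n C). b \<le> v}"
proof (cases "n \<le> v")
  case True
  then have "{b \<in> set (cap_col n C). b \<le> v} = set (cap_col n C)"
    using set_cap_col_subset by fastforce
  moreover have "card {b \<in> set C. b \<le> v} \<le> card (set C)"
    by (intro card_mono) auto
  ultimately show ?thesis
    using length_cap_col[OF assms] sorted_cap_col assms(1)
    by (simp add: distinct_card strict_sorted_iff)
next
  case False
  then have "{b \<in> set C. b \<le> v} \<subseteq> {b \<in> set (cap_col n C). b \<le> v}"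
    using assms(2) by (auto simp: set_cap_col Suc_le_eq intro: gr0I)
  then show ?thesis
    by (intro card_mono) auto
qed

lemma card_cap_col_le_max:
  assumes "distinct C" "0 \<notin> set C" "length C \<le> n"
  shows "card {b \<in> set (cap_col n C). b \<le> v}
           \<le> max (card {b \<in> set C. b \<le> v}) (length C - (n - v))"
proof (cases "\<exists>e \<in> cap_fill n C. e \<le> v")
  case False
  then have "{b \<in> set (cap_col n C). b \<le> v} \<subseteq> {b \<in> set C. b \<le> v}"
    by (auto simp: set_cap_col)
  then have "card {b \<in> set (cap_col n C). b \<le> v} \<le> card {b \<in> set C. b \<le> v}"
    by (rule card_mono[rotated]) simp
  then show ?thesis by simp
next
  case True
  then obtain e where e: "e \<in> cap_fill n C" "e \<le> v" by blast
  have above_v: "{v<..n} \<subseteq> set (cap_col n C)"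
  proof
    fix f assume f: "f \<in> {v<..n}"
    show "f \<in> set (cap_col n C)"
    proof (cases "f \<in> set C")
      case True
      then show ?thesis using f by (simp add: set_cap_col)
    next
      case False
      have "{g \<in> {1..n} - set C. f < g} \<subseteq> {g \<in> {1..n} - set C. e < g}"
        using f e by auto
      then have "card {g \<in> {1..n} - set C. f < g} \<le> card {g \<in> {1..n} - set C. e < g}"
        by (rule card_mono[rotated]) simp
      then have "f \<in> cap_fill n C"
        using e f False unfolding cap_fill_iff by simp
      then show ?thesis by (simp add: set_cap_col)
    qed
  qed
  have "{b \<in> set (cap_col n C). b \<le> v} = set (cap_col n C) - {v<..n}"
    using set_cap_col_subset[of n C] by auto
  then have "card {b \<in> set (cap_col n C). b \<le> v} = length C - (n - v)"
    using above_v length_cap_col[OF assms] sorted_cap_col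
    by (simp add: card_Diff_subset distinct_card strict_sorted_iff)
  then show ?thesis by simp
qed

lemma list_all2_le_cap_col_iff:
  assumes a: "sorted_wrt (<) a" "set a \<subseteq> {..n}"
    and C: "sorted_wrt (<) C" "0 \<notin> set C" "length C \<le> n"
  shows "list_all2 (\<le>) a (cap_col n C) \<longleftrightarrow> list_all2 (\<le>) a C"
proof (cases "length a = length C")
  case False
  then show ?thesis
    using C length_cap_col[of C n] by (auto simp: strict_sorted_iff dest: list_all2_lengthD)
next
  case True
  have "distinct C" using C(1) by (simp add: strict_sorted_iff)
  have card_a: "card (set a) = length C"
    using a(1) True by (simp add: strict_sorted_iff distinct_card)
  let ?cnt = "\<lambda>X v. card {b \<in> X. b \<le> v}"
  have "(\<forall>v. ?cnt (set (cap_col n C)) v \<le> ?cnt (set a) v) \<longleftrightarrow> (\<forall>v. ?cnt (set C) v \<le> ?cnt (set a) v)"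
  proof
    assume "\<forall>v. ?cnt (set (cap_col n C)) v \<le> ?cnt (set a) v"
    then show "\<forall>v. ?cnt (set C) v \<le> ?cnt (set a) v"
      using card_le_card_cap_col[OF \<open>distinct C\<close> C(2,3)] order_trans by blast
  next
    assume "\<forall>v. ?cnt (set C) v \<le> ?cnt (set a) v"
    moreover have "length C - (n - v) \<le> ?cnt (set a) v" for v
      using card_minus_le_card_atMost[OF a(2)] card_a by metis
    ultimately show "\<forall>v. ?cnt (set (cap_col n C)) v \<le> ?cnt (set a) v"
      using card_cap_col_le_max[OF \<open>distinct C\<close> C(2,3)] by (meson max.boundedI order_trans)
  qed
  then show ?thesis
    using True length_cap_col[OF \<open>distinct C\<close> C(2,3)]
    by (simp add: list_all2_le_iff_card_le[OF a(1) sorted_cap_col]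
        list_all2_le_iff_card_le[OF a(1) C(1)])
qed

lemma length_cap [simp]: "length (cap n T) = length T"
  by (simp add: cap_def)

lemma nth_cap [simp]: "c < length T \<Longrightarrow> cap n T ! c = cap_col n (T ! c)"
  by (simp add: cap_def)

lemma is_key_columnD:
  assumes "is_key T" "at_most_rows n T" "c < length T"
  shows "T ! c \<noteq> []" "sorted_wrt (<) (T ! c)" "distinct (T ! c)" "0 \<notin> set (T ! c)"
    "length (T ! c) \<le> n"
  using assms by (auto simp: is_key_def at_most_rows_def strict_sorted_iff)

lemma shape_cap:
  assumes "is_key T" "at_most_rows n T"
  shows "shape (cap n T) = shape T"
  using is_key_columnD[OF assms] length_cap_col
  by (auto simp: shape_def intro!: nth_equalityI)

lemma is_key_cap:
  assumes "is_key T" "at_most_rows n T"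
  shows "is_key (cap n T)"
  unfolding is_key_def
proof (intro conjI allI impI)
  fix c assume c: "c < length (cap n T)"
  then show "cap n T ! c \<noteq> []"
    using is_key_columnD[OF assms] length_cap_col by (metis length_0_conv length_cap nth_cap)
  show "sorted_wrt (<) (cap n T ! c)" "0 \<notin> set (cap n T ! c)"
    using c set_cap_col_subset sorted_cap_col by (auto simp: subset_iff)
next
  fix c assume "Suc c < length (cap n T)"
  then show "set (cap n T ! Suc c) \<subseteq> set (cap n T ! c)"
    using assms(1) is_key_columnD[OF assms] by (simp add: is_key_def set_cap_col_mono)
qed

lemma set_cap_subset: "\<forall>col \<in> set (cap n T). set col \<subseteq> {1..n}"
  using set_cap_col_subset by (auto simp: cap_def)

lemma is_key_mem_prefix_closed:
  assumes "is_key K"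
  shows "sorted_wrt (\<lambda>A B. i \<in> set B \<longrightarrow> i \<in> set A) K"
proof -
  have "transp (\<lambda>A B. set B \<subseteq> set A :: bool)"
    by (auto intro: transpI)
  then have "sorted_wrt (\<lambda>A B. set B \<subseteq> set A) K"
    using assms by (subst sorted_wrt_iff_nth_Suc_transp) (auto simp: is_key_def)
  then show ?thesis
    by (rule sorted_wrt_mono_rel[rotated]) auto
qed

lemma sum_list_count_list_distinct:
  "\<forall>col \<in> set K. distinct col \<Longrightarrow>
     (\<Sum>col\<leftarrow>K. count_list col i) = length (filter (\<lambda>col. i \<in> set col) K)"
proof (induction K)
  case (Cons col K)
  have "count_list col i = (if i \<in> set col then 1 else 0)"
    using Cons.prems by (induction col) auto
  then show ?case using Cons by simp
qed simp

lemma wt_tab_key: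
  assumes "is_key K" "1 \<le> i" "i \<le> n"
  shows "wt_tab n K i = length (takeWhile (\<lambda>col. i \<in> set col) K)"
proof -
  have "\<forall>col \<in> set K. distinct col"
    using assms(1) by (auto simp: is_key_def in_set_conv_nth strict_sorted_iff)
  then show ?thesis
    using assms(2,3) is_key_mem_prefix_closed[OF assms(1)]
    by (simp add: wt_tab_def sum_list_count_list_distinct filter_eq_takeWhile_prefix_closed)
qed

lemma mem_key_column_iff:
  assumes "is_key K" "c < length K" "i \<in> {1..n}"
  shows "i \<in> set (K ! c) \<longleftrightarrow> c < wt_tab n K i"
  using assms wt_tab_key less_length_takeWhile_iff_prefix_closed[OF is_key_mem_prefix_closed]
  by simp

lemma Max_wt_tab_key:
  assumes K: "is_key K" and bounded: "\<forall>col \<in> set K. set col \<subseteq> {1..n}"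
  shows "Max (insert 0 (wt_tab n K ` {1..n})) = length K"
proof (cases "K = []")
  case False
  then have last: "length K - 1 < length K"
    by simp
  then obtain i where i: "i \<in> set (K ! (length K - 1))"
    using K unfolding is_key_def by (metis ex_in_conv set_empty)
  then have "i \<in> {1..n}"
    using bounded nth_mem[OF last] by blast
  have le: "wt_tab n K j \<le> length K" if "j \<in> {1..n}" for j
    using that wt_tab_key[OF K] length_takeWhile_le by simp
  have "wt_tab n K i = length K"
    using i mem_key_column_iff[OF K last \<open>i \<in> {1..n}\<close>] le[OF \<open>i \<in> {1..n}\<close>] by simp
  then have "length K \<in> wt_tab n K ` {1..n}"
    using \<open>i \<in> {1..n}\<close> by (metis image_eqI)
  then show ?thesis
    using le by (intro Max_eqI) auto
qed (simp add: wt_tab_def image_constant_conv)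

lemma key_of_wt_tab:
  assumes K: "is_key K" and bounded: "\<forall>col \<in> set K. set col \<subseteq> {1..n}"
  shows "key_of n (wt_tab n K) = K"
proof -
  have "filter (\<lambda>i. Suc c \<le> wt_tab n K i) [1..<Suc n] = K ! c" if c: "c < length K" for c
  proof (rule strict_sorted_equal)
    show "sorted_wrt (<) (filter (\<lambda>i. Suc c \<le> wt_tab n K i) [1..<Suc n])"
      by (simp add: sorted_wrt_filter del: upt_Suc)
    show "sorted_wrt (<) (K ! c)"
      using K c by (simp add: is_key_def)
    have "set (K ! c) \<subseteq> {1..n}"
      using bounded c by simp
    then show "set (filter (\<lambda>i. Suc c \<le> wt_tab n K i) [1..<Suc n]) = set (K ! c)"
      using mem_key_column_iff[OF K c, where n = n] by (auto simp: Suc_le_eq simp del: upt_Suc)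
  qed
  then show ?thesis
    unfolding key_of_def Max_wt_tab_key[OF assms]
    by (intro nth_equalityI) (simp_all del: upt_Suc)
qed

lemma wsize_wt_tab:
  assumes "\<forall>col \<in> set K. set col \<subseteq> {1..n}"
  shows "wsize n (wt_tab n K) = ncells K"
  using assms by (induction K) (simp_all add: wsize_def wt_tab_def ncells_def shape_def
      sum.distrib sum_count_set)

lemma is_rsvt_cellD:
  assumes "is_rsvt Q" "c < length Q" "r < length (Q ! c)"
  shows "Q ! c ! r \<noteq> {}" "finite (Q ! c ! r)" "0 \<notin> Q ! c ! r"
  using assms unfolding is_rsvt_def by blast+

lemma rsvt_entriesE:
  assumes "y \<in> rsvt_entries Q"
  obtains c r where "c < length Q" "r < length (Q ! c)" "y \<in> Q ! c ! r"
  using assms by (auto simp: rsvt_entries_def in_set_conv_nth)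

lemma zero_notin_rsvt_entries: "is_rsvt Q \<Longrightarrow> 0 \<notin> rsvt_entries Q"
  by (metis is_rsvt_cellD(3) rsvt_entriesE)

lemma set_Lmax_subset:
  assumes "is_rsvt Q" "col \<in> set (Lmax Q)"
  shows "set col \<subseteq> rsvt_entries Q"
proof
  fix y assume "y \<in> set col"
  then obtain c r where c: "c < length Q" and r: "r < length (Q ! c)" and y: "y = Max (Q ! c ! r)"
    using assms(2) by (auto simp: Lmax_def in_set_conv_nth)
  have "y \<in> Q ! c ! r"
    using is_rsvt_cellD[OF assms(1) c r] y by simp
  moreover have "Q ! c ! r \<in> set (concat Q)"
    using c r by (auto intro!: bexI[of _ "Q ! c"])
  ultimately show "y \<in> rsvt_entries Q"
    by (auto simp: rsvt_entries_def)
qed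

lemma pick_subset: "finite T \<Longrightarrow> pick T ss \<subseteq> T"
proof (induction ss arbitrary: T)
  case (Cons s ss)
  show ?case
  proof (cases "{t \<in> T. s \<le> t} = {}")
    case False
    then have "Min {t \<in> T. s \<le> t} \<in> T"
      using Cons.prems Min_in[of "{t \<in> T. s \<le> t}"] by auto
    then show ?thesis
      using Cons False by (auto simp: Let_def)
  qed (use Cons in \<open>simp add: Let_def\<close>)
qed simp

lemma foldr_domin_subset:
  "\<forall>X \<in> set Xs. finite X \<and> X \<subseteq> B \<Longrightarrow> S \<subseteq> B \<Longrightarrow> foldr domin Xs S \<subseteq> B"
  by (induction Xs) (auto simp: domin_def dest!: pick_subset)

lemma K_minus_column_bounded:
  assumes "\<forall>col \<in> set Lt. set col \<subseteq> B" "finite B" "a \<in> set (K_minus Lt)"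
  shows "sorted_wrt (<) a" "set a \<subseteq> B"
proof -
  obtain i where i: "i < length Lt"
    and a: "a = sorted_list_of_set (foldr domin (map set (take i Lt)) (set (Lt ! i)))"
    using assms(3) by (auto simp: K_minus_def)
  have "foldr domin (map set (take i Lt)) (set (Lt ! i)) \<subseteq> B"
    using assms(1,2) i by (intro foldr_domin_subset) (auto dest: in_set_takeD finite_subset)
  moreover from this have "finite (foldr domin (map set (take i Lt)) (set (Lt ! i)))"
    using assms(2) by (rule finite_subset)
  ultimately show "sorted_wrt (<) a" "set a \<subseteq> B"
    using a by auto
qed

lemma entrywise_le_cap_iff:
  assumes "is_key T" "at_most_rows n T"
    and A: "\<forall>a \<in> set A. sorted_wrt (<) a \<and> set a \<subseteq> {..n}"
  shows "entrywise_le A (cap n T) \<longleftrightarrow> entrywise_le A T"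
proof -
  have "list_all2 (\<le>) (A ! c) (cap n T ! c) \<longleftrightarrow> list_all2 (\<le>) (A ! c) (T ! c)"
    if "c < length A" "c < length T" for c
    using that A is_key_columnD[OF assms(1,2)] list_all2_le_cap_col_iff by simp
  then show ?thesis
    by (auto simp: entrywise_le_def list_all2_conv_all_nth)
qed

lemma rsvt_entries_subset_atMost_iff:
  "is_rsvt Q \<Longrightarrow> rsvt_entries Q \<subseteq> {..n} \<longleftrightarrow> rsvt_entries Q \<subseteq> {1..n}"
  using zero_notin_rsvt_entries by (auto simp: subset_iff Suc_le_eq intro: gr0I)

lemma entrywise_le_K_minus_cap_iff:
  assumes "is_key T" "at_most_rows n T" "is_rsvt Q" "rsvt_entries Q \<subseteq> {..n}"
  shows "entrywise_le (K_minus (Lmax Q)) (cap n T) \<longleftrightarrow> entrywise_le (K_minus (Lmax Q)) T"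
proof (rule entrywise_le_cap_iff[OF assms(1,2)])
  have "\<forall>col \<in> set (Lmax Q). set col \<subseteq> {..n}"
    using set_Lmax_subset[OF assms(3)] assms(4) by blast
  then show "\<forall>a \<in> set (K_minus (Lmax Q)). sorted_wrt (<) a \<and> set a \<subseteq> {..n}"
    by (simp add: K_minus_column_bounded)
qed

theorem corollary3p3:
  fixes T :: "nat list list" and n :: nat and \<beta> :: "'a::comm_ring_1" and x :: "nat \<Rightarrow> 'a"
  assumes "is_key T" and "at_most_rows n T"
  shows "(\<Sum>Q\<in>{Q. is_rsvt Q \<and> shape Q = shape T \<and> entrywise_le (K_minus (Lmax Q)) T \<and>
                  rsvt_entries Q \<subseteq> {..n}}.
            \<beta> ^ (rsvt_size Q - ncells T) * xpow n x (wt_rsvt Q))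
         = lascoux n \<beta> x (wt_tab n (cap n T))"
proof -
  have key: "key_of n (wt_tab n (cap n T)) = cap n T"
    by (rule key_of_wt_tab[OF is_key_cap[OF assms] set_cap_subset])
  have "wsize n (wt_tab n (cap n T)) = ncells (cap n T)"
    by (rule wsize_wt_tab[OF set_cap_subset])
  also have "\<dots> = ncells T"
    using shape_cap[OF assms] by (simp add: ncells_def)
  finally have size: "wsize n (wt_tab n (cap n T)) = ncells T" .
  have index_iff:
    "(is_rsvt Q \<and> shape Q = shape T \<and> entrywise_le (K_minus (Lmax Q)) T \<and> rsvt_entries Q \<subseteq> {..n})
     \<longleftrightarrow> (is_rsvt Q \<and> rsvt_entries Q \<subseteq> {1..n} \<and> shape Q = shape T \<and>
          entrywise_le (K_minus (Lmax Q)) (cap n T))" for Q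
    using rsvt_entries_subset_atMost_iff[of Q n] entrywise_le_K_minus_cap_iff[OF assms, of Q]
    by metis
  show ?thesis
    by (simp only: lascoux_def key size shape_cap[OF assms] index_iff)
qed

end
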